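(* Let $N\ge 3$ be an integer, let $\Delta\theta^*=2\pi/N$, and let $P\neq 0$ be a real constant. Let $(\theta_k)_{k\ge1}$ and $(\omega_k)_{k\ge1}$ be real sequences with $\omega_k>0$ for all $k$, satisfying for every $k\ge 1$ $$\theta_{k+1}=\theta_k+\Delta\theta^*,\qquad \omega_{k+1}-\omega_k=P\sin\theta_k\left[\frac{1}{\omega_k}+\frac{1}{\omega_{k+1}}\right],$$ and the assumption $\omega_k^2>|P|$ for every $k\ge1$. If $\theta_1=\Delta\theta^*/2$, then the solution is periodic with period $N$: for every $k\ge1$, $\theta_{k+N}=\theta_k+2\pi$ and $\omega_{k+N}=\omega_k$.
   Context: This is the "discrete zero dynamics" of a devil-stick with parameter $\phi=\pm\pi/2$; in the paper $P=\frac{g(\Delta\theta^* )^2}{2R\sin(\Delta\theta^* )}$ if $\phi=-\pi/2$ and $P=-\frac{g(\Delta\theta^* )^2}{2R\sin(\Delta\theta^* )}$ if $\phi=\pi/2$, where $g>0$ and $R>0$ are constants. The hypothesis $\omega_k^2>|P|$ for all $k$ is the paper's Assumption 1. *)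

theory Defs
  imports Complex_Main
begin

end

theory Submission
  imports Defs
begin

text \<open>Reading the recurrence backwards in time turns the forcing \<open>P sin \<theta>\<^sub>k\<close> into its
negative. With \<open>\<theta>\<^sub>1 = \<Delta>\<theta>*/2\<close> the forcing over one period is antisymmetric,
\<open>sin \<theta>\<^sub>N\<^sub>+\<^sub>1\<^sub>-\<^sub>k = - sin \<theta>\<^sub>k\<close>, so the time-reversed sequence \<open>\<omega>\<^sub>N\<^sub>+\<^sub>2\<^sub>-\<^sub>k\<close> solves the
same recurrence on \<open>1..N+1\<close> and meets \<open>\<omega>\<close> in the middle of the period. The assumption
\<open>\<omega>\<^sub>k\<^sup>2 > |P|\<close> makes each step uniquely solvable in either direction, so the two solutions
coincide, giving \<open>\<omega>\<^sub>N\<^sub>+\<^sub>1 = \<omega>\<^sub>1\<close>; forward uniqueness then propagates this to all \<open>k\<close>.\<close>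

definition zero_dynamics_step :: "real \<Rightarrow> real \<Rightarrow> real \<Rightarrow> bool" where
  "zero_dynamics_step s a b \<longleftrightarrow> b - a = s * (1 / a + 1 / b)"

lemma zero_dynamics_step_swap:
  "zero_dynamics_step s a b \<longleftrightarrow> zero_dynamics_step (- s) b a"
  unfolding zero_dynamics_step_def by (auto simp: algebra_simps)

lemma zero_dynamics_step_unique:
  assumes "zero_dynamics_step s a x" "zero_dynamics_step s a y"
    and "x > 0" "y > 0" "\<bar>s\<bar> < x * y"
  shows "x = y"
proof -
  have "x - y = s * (1 / x - 1 / y)"
    using assms(1,2) unfolding zero_dynamics_step_def by (simp add: algebra_simps)
  hence "(x - y) * (x * y + s) = 0"
    using assms(3,4) by (simp add: field_simps)
  moreover have "x * y + s > 0" using assms(5) by linarith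
  ultimately show ?thesis by simp
qed

lemma less_mult_of_less_squares:
  fixes x y Q :: real
  assumes "x > 0" "y > 0" "Q < x\<^sup>2" "Q < y\<^sup>2"
  shows "Q < x * y"
proof (cases "Q < 0")
  case False
  have "sqrt Q < x" "sqrt Q < y"
    using assms real_less_lsqrt False by auto
  hence "sqrt Q * sqrt Q < x * y"
    using False assms(1) by (intro mult_strict_mono) auto
  thus ?thesis using False by simp
qed (use mult_pos_pos[OF assms(1,2)] in linarith)

lemma zero_dynamics_forward_unique:
  assumes "a \<le> b"
    and "\<And>k. a \<le> k \<Longrightarrow> k < b \<Longrightarrow> zero_dynamics_step (s k) (x k) (x (Suc k))"
    and "\<And>k. a \<le> k \<Longrightarrow> k < b \<Longrightarrow> zero_dynamics_step (s k) (y k) (y (Suc k))"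
    and "\<And>k. a < k \<Longrightarrow> k \<le> b \<Longrightarrow> x k > 0 \<and> y k > 0"
    and "\<And>k. a \<le> k \<Longrightarrow> k < b \<Longrightarrow> \<bar>s k\<bar> < x (Suc k) * y (Suc k)"
    and "x a = y a"
  shows "x b = y b"
  using assms(1)
proof (induction b rule: dec_induct)
  case (step k)
  thus ?case
    using assms(2,3,5)[of k] assms(4)[of "Suc k"]
      zero_dynamics_step_unique[of "s k" "x k" "x (Suc k)" "y (Suc k)"]
    by auto
qed (use assms(6) in simp)

lemma zero_dynamics_backward_unique:
  assumes "a \<le> b"
    and "\<And>k. a \<le> k \<Longrightarrow> k < b \<Longrightarrow> zero_dynamics_step (s k) (x k) (x (Suc k))"
    and "\<And>k. a \<le> k \<Longrightarrow> k < b \<Longrightarrow> zero_dynamics_step (s k) (y k) (y (Suc k))"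
    and "\<And>k. a \<le> k \<Longrightarrow> k < b \<Longrightarrow> x k > 0 \<and> y k > 0"
    and "\<And>k. a \<le> k \<Longrightarrow> k < b \<Longrightarrow> \<bar>s k\<bar> < x k * y k"
    and "x b = y b"
  shows "x a = y a"
  using assms(1)
proof (induction a rule: inc_induct)
  case (step k)
  thus ?case
    using assms(2-5)[of k] zero_dynamics_step_swap
      zero_dynamics_step_unique[of "- s k" "x (Suc k)" "x k" "y k"]
    by auto
qed (use assms(6) in simp)

text \<open>The meeting point is \<open>m = N div 2 + 1\<close>. For odd \<open>N\<close> the antisymmetry forces
\<open>s m = 0\<close>, so \<open>\<omega>\<close> is constant across the middle step.\<close>

lemma zero_dynamics_antisymmetric_return:
  fixes s \<omega> :: "nat \<Rightarrow> real" and Q :: real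
  assumes step: "\<And>k. 1 \<le> k \<Longrightarrow> k \<le> N \<Longrightarrow> zero_dynamics_step (s k) (\<omega> k) (\<omega> (Suc k))"
    and antisym: "\<And>k. 1 \<le> k \<Longrightarrow> k \<le> N \<Longrightarrow> s (N + 1 - k) = - s k"
    and pos: "\<And>k. 1 \<le> k \<Longrightarrow> k \<le> N + 1 \<Longrightarrow> \<omega> k > 0"
    and large: "\<And>k. 1 \<le> k \<Longrightarrow> k \<le> N + 1 \<Longrightarrow> Q < (\<omega> k)\<^sup>2"
    and bound: "\<And>k. \<bar>s k\<bar> \<le> Q"
  shows "\<omega> (N + 1) = \<omega> 1"
proof -
  define u where "u j = \<omega> (N + 2 - j)" for j
  have u_step: "zero_dynamics_step (s j) (u j) (u (Suc j))" if "1 \<le> j" "j \<le> N" for j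
  proof -
    have "zero_dynamics_step (s (N + 1 - j)) (\<omega> (N + 1 - j)) (\<omega> (N + 2 - j))"
      using step[of "N + 1 - j"] that by (simp add: Suc_diff_le)
    thus ?thesis
      unfolding u_def using antisym[OF that] zero_dynamics_step_swap by simp
  qed
  define m where "m = N div 2 + 1"
  have u_mid: "u m = \<omega> m"
  proof (cases "even N")
    case False
    then obtain n where n: "N = 2 * n + 1" using oddE by blast
    have "s (n + 1) = 0" using antisym[of "n + 1"] n by simp
    hence "\<omega> (n + 2) = \<omega> (n + 1)"
      using step[of "n + 1"] n unfolding zero_dynamics_step_def by simp
    thus ?thesis unfolding u_def m_def using n by simp
  qed (auto simp: u_def m_def)
  have "u 1 = \<omega> 1"
  proof (rule zero_dynamics_backward_unique[of 1 m s])
    fix k assume k: "1 \<le> k" "k < m"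
    hence "k \<le> N" "N + 2 - k \<le> N + 1" "1 \<le> N + 2 - k" unfolding m_def by auto
    thus "zero_dynamics_step (s k) (u k) (u (Suc k))" "zero_dynamics_step (s k) (\<omega> k) (\<omega> (Suc k))"
      "u k > 0 \<and> \<omega> k > 0" "\<bar>s k\<bar> < u k * \<omega> k"
      using k u_step step pos large bound[of k]
        less_mult_of_less_squares[of "u k" "\<omega> k" Q]
      by (auto simp: u_def)
  qed (use u_mid in \<open>auto simp: m_def\<close>)
  thus ?thesis by (simp add: u_def)
qed

lemma zero_dynamics_periodic:
  fixes s \<omega> :: "nat \<Rightarrow> real" and Q :: real
  assumes step: "\<And>k. 1 \<le> k \<Longrightarrow> zero_dynamics_step (s k) (\<omega> k) (\<omega> (Suc k))"
    and s_periodic: "\<And>k. 1 \<le> k \<Longrightarrow> s (k + N) = s k"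
    and pos: "\<And>k. 1 \<le> k \<Longrightarrow> \<omega> k > 0"
    and large: "\<And>k. 1 \<le> k \<Longrightarrow> Q < (\<omega> k)\<^sup>2"
    and bound: "\<And>k. \<bar>s k\<bar> \<le> Q"
    and return: "\<omega> (1 + N) = \<omega> 1"
    and "1 \<le> k"
  shows "\<omega> (k + N) = \<omega> k"
proof (rule zero_dynamics_forward_unique[of 1 k s "\<lambda>k. \<omega> (k + N)"])
  fix j :: nat assume "1 \<le> j"
  thus "zero_dynamics_step (s j) (\<omega> (j + N)) (\<omega> (Suc j + N))"
    "zero_dynamics_step (s j) (\<omega> j) (\<omega> (Suc j))"
    "\<bar>s j\<bar> < \<omega> (Suc j + N) * \<omega> (Suc j)"
    using step[of "j + N"] step[of j] s_periodic[of j] pos large bound[of j]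
      less_mult_of_less_squares[of "\<omega> (Suc j + N)" "\<omega> (Suc j)" Q]
    by auto
qed (use assms in auto)

lemma half_offset_angle_formula:
  fixes \<theta> :: "nat \<Rightarrow> real"
  assumes increment: "\<And>k. 1 \<le> k \<Longrightarrow> \<theta> (k + 1) = \<theta> k + 2 * pi / real N"
    and init: "\<theta> 1 = (2 * pi / real N) / 2"
    and "1 \<le> k"
  shows "\<theta> k = (2 * real k - 1) * pi / real N"
  using \<open>1 \<le> k\<close>
proof (induction k rule: dec_induct)
  case (step n)
  thus ?case using increment[of n] by (simp add: add_divide_distrib[symmetric] algebra_simps)
qed (use init in simp)

lemma half_offset_angle_period:
  fixes \<theta> :: "nat \<Rightarrow> real"
  assumes "\<And>k. 1 \<le> k \<Longrightarrow> \<theta> (k + 1) = \<theta> k + 2 * pi / real N"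
    and "\<theta> 1 = (2 * pi / real N) / 2"
    and "0 < N" "1 \<le> k"
  shows "\<theta> (k + N) = \<theta> k + 2 * pi"
proof -
  have shifted: "\<theta> (k + N) = (2 * real (k + N) - 1) * pi / real N"
    using half_offset_angle_formula[OF assms(1,2)] assms(4) by simp
  show ?thesis
    unfolding shifted using assms(3)
    by (simp add: half_offset_angle_formula[OF assms(1,2,4)] field_simps)
qed

lemma half_offset_angle_reflection:
  fixes \<theta> :: "nat \<Rightarrow> real"
  assumes "\<And>k. 1 \<le> k \<Longrightarrow> \<theta> (k + 1) = \<theta> k + 2 * pi / real N"
    and "\<theta> 1 = (2 * pi / real N) / 2"
    and "1 \<le> k" "k \<le> N"
  shows "\<theta> (N + 1 - k) = 2 * pi - \<theta> k"
proof -
  have reflected: "\<theta> (N + 1 - k) = (2 * (real N + 1 - real k) - 1) * pi / real N"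
    using half_offset_angle_formula[OF assms(1,2), of "N + 1 - k"] assms(4) by (simp add: of_nat_diff)
  have "real N > 0" using assms(3,4) by simp
  show ?thesis
    unfolding reflected using \<open>real N > 0\<close>
    by (simp add: half_offset_angle_formula[OF assms(1,2,3)] field_simps)
qed

theorem lemma2:
  fixes N :: nat and P :: real and \<theta> \<omega> :: "nat \<Rightarrow> real"
  assumes hN: "N \<ge> 3"
    and hP: "P \<noteq> 0"
    and hpos: "\<And>k. k \<ge> 1 \<Longrightarrow> \<omega> k > 0"
    and htheta: "\<And>k. k \<ge> 1 \<Longrightarrow> \<theta> (k + 1) = \<theta> k + 2 * pi / real N"
    and homega: "\<And>k. k \<ge> 1 \<Longrightarrow>
        \<omega> (k + 1) - \<omega> k = P * sin (\<theta> k) * (1 / \<omega> k + 1 / \<omega> (k + 1))"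
    and hassm: "\<And>k. k \<ge> 1 \<Longrightarrow> (\<omega> k)\<^sup>2 > \<bar>P\<bar>"
    and hinit: "\<theta> 1 = (2 * pi / real N) / 2"
  shows "\<forall>k\<ge>1. \<theta> (k + N) = \<theta> k + 2 * pi \<and> \<omega> (k + N) = \<omega> k"
proof -
  define s where "s k = P * sin (\<theta> k)" for k
  have step: "zero_dynamics_step (s k) (\<omega> k) (\<omega> (Suc k))" if "1 \<le> k" for k
    using homega[OF that] by (simp add: zero_dynamics_step_def s_def)
  have bound: "\<bar>s k\<bar> \<le> \<bar>P\<bar>" for k
    by (simp add: s_def abs_mult mult_left_le)
  have theta_period: "\<theta> (k + N) = \<theta> k + 2 * pi" if "1 \<le> k" for k
    using half_offset_angle_period[OF htheta hinit _ that] hN by simp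
  have "s (N + 1 - k) = - s k" if "1 \<le> k" "k \<le> N" for k
    using half_offset_angle_reflection[OF htheta hinit that] by (simp add: s_def sin_diff)
  hence "\<omega> (N + 1) = \<omega> 1"
    using zero_dynamics_antisymmetric_return[of N s \<omega> "\<bar>P\<bar>"] step hpos hassm bound by simp
  hence "\<omega> (k + N) = \<omega> k" if "1 \<le> k" for k
    using zero_dynamics_periodic[of s \<omega> N "\<bar>P\<bar>" k] step hpos hassm bound that theta_period
    by (simp add: s_def add.commute)
  thus ?thesis using theta_period by simp
qed

end
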